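(* Let $\mathcal B$ be a finite set of complex numbers $\beta$ with $\mathrm{Re}(\beta)\ge\gamma\ge1$, let $s>0$, and $\theta_\beta(z)=(z+\beta)^{-1}$. Let $H$ be a bounded, mildly regular open subset of $\mathbb C$ with $H\supset\{z:|z-1/(2\gamma)|<1/(2\gamma)\}$ and $\mathrm{Re}(z)>0$ for all $z\in H$, and let $v_s$ be the strictly positive eigenvector (unique up to normalization) of $\Lambda_s:C^m(\bar H)\to C^m(\bar H)$, $(\Lambda_sf)(z)=\sum_{\beta\in\mathcal B}|z+\beta|^{-2s}f(\theta_\beta(z))$, $m\ge1$. Then for all $z_0,z_1\in H$, $$v_s(z_0)\le v_s(z_1)\exp\big[(\sqrt5\,s/\gamma)|z_1-z_0|\big].$$
   Context: $H$ is mildly regular if there exist $\eta>0$, $M\ge1$ such that whenever $x,y\in H$ with $\|x-y\|<\eta$ there is a Lipschitz $\psi:[0,1]\to H$ with $\psi(0)=x$, $\psi(1)=y$, $\int_0^1\|\psi'(t)\|dt\le M\|x-y\|$. $C^m(\bar H)$ is the space of real $C^m$ functions on $H$ whose partial derivatives of order $\le m$ extend continuously to $\bar H$. *)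

theory Defs
  imports "HOL-Analysis.Analysis"
begin

definition mildly_regular :: "complex set \<Rightarrow> bool" where
  "mildly_regular H \<longleftrightarrow>
     (\<exists>\<eta>>0. \<exists>M\<ge>1. \<forall>x\<in>H. \<forall>y\<in>H. norm (x - y) < \<eta> \<longrightarrow>
        (\<exists>\<psi> :: real \<Rightarrow> complex. (\<exists>L. L-lipschitz_on {0..1} \<psi>) \<and> \<psi> ` {0..1} \<subseteq> H \<and>
            \<psi> 0 = x \<and> \<psi> 1 = y \<and>
            (\<exists>I. ((\<lambda>t. norm (vector_derivative \<psi> (at t))) has_integral I) {0..1} \<and>
                 I \<le> M * norm (x - y))))"

definition extends_cont :: "complex set \<Rightarrow> (complex \<Rightarrow> real) \<Rightarrow> bool" where
  "extends_cont H f \<longleftrightarrow> (\<exists>g. continuous_on (closure H) g \<and> (\<forall>z\<in>H. g z = f z))"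

text \<open>C^m(closure H): real C^m functions on H (H viewed as open subset of R^2, partial
  derivatives in the directions 1 and i) whose partial derivatives of order \<le> m extend
  continuously to the closure.\<close>
fun Cm_bar :: "nat \<Rightarrow> complex set \<Rightarrow> (complex \<Rightarrow> real) \<Rightarrow> bool" where
  "Cm_bar 0 H f = (continuous_on H f \<and> extends_cont H f)"
| "Cm_bar (Suc m) H f = (Cm_bar 0 H f \<and> f differentiable_on H \<and>
      Cm_bar m H (\<lambda>z. frechet_derivative f (at z) 1) \<and>
      Cm_bar m H (\<lambda>z. frechet_derivative f (at z) \<i>))"

definition strictly_pos_bar :: "complex set \<Rightarrow> (complex \<Rightarrow> real) \<Rightarrow> bool" where
  "strictly_pos_bar H f \<longleftrightarrow>
     (\<exists>g. continuous_on (closure H) g \<and> (\<forall>z\<in>H. g z = f z) \<and> (\<forall>z\<in>closure H. g z > 0))"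

definition Lambda_op :: "complex set \<Rightarrow> real \<Rightarrow> (complex \<Rightarrow> real) \<Rightarrow> complex \<Rightarrow> real" where
  "Lambda_op B s f z = (\<Sum>\<beta>\<in>B. cmod (z + \<beta>) powr (-2 * s) * f (inverse (z + \<beta>)))"

end

theory Submission
  imports Defs
begin

text \<open>
  Iterating the eigenvalue equation N times writes \<open>\<lambda>\<^sup>N v(z)\<close> as a sum, over words
  \<open>\<beta>\<^sub>1\<dots>\<beta>\<^sub>N\<close> in \<open>\<B>\<close>, of weights times values of \<open>v\<close> at the image of \<open>z\<close> under the composed
  map \<open>\<theta>\<^sub>\<beta>\<^sub>N \<circ> \<dots> \<circ> \<theta>\<^sub>\<beta>\<^sub>1\<close>. Each weight is a Moebius cocycle of the form \<open>c |z - p|\<^sup>-\<^sup>2\<^sup>s\<close>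
  with \<open>Re p \<le> -\<gamma>\<close>, so its values at \<open>z\<^sub>0\<close> and \<open>z\<^sub>1\<close> differ by at most the factor
  \<open>exp (2s|z\<^sub>1 - z\<^sub>0|/\<gamma>)\<close>. The composed maps contract a fixed region of the right half plane,
  so for long words the two values of \<open>v\<close> agree up to any \<open>\<epsilon>\<close> by uniform continuity, and
  comparing the two sums gives the estimate with the constant 2, which is better than \<open>\<surd>5\<close>.
\<close>

lemma Re_inverse_pos: "0 < Re u \<Longrightarrow> 0 < Re (inverse u)"
  by (simp add: Re_inverse add_pos_nonneg sum_power2_gt_zero_iff divide_pos_pos)

lemma norm_inverse_le_one: "1 \<le> Re u \<Longrightarrow> cmod (inverse u) \<le> 1"
  using complex_Re_le_cmod[of u] by (simp add: norm_inverse inverse_le_1_iff)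

lemma Re_inverse_ge:
  assumes "1 \<le> Re u" "cmod u \<le> R"
  shows "1 / R\<^sup>2 \<le> Re (inverse u)"
proof -
  have "1 \<le> cmod u" using assms(1) complex_Re_le_cmod[of u] by linarith
  then have "1 / R\<^sup>2 \<le> 1 / (cmod u)\<^sup>2"
    using assms(2) by (intro divide_left_mono power_mono mult_pos_pos) auto
  also have "\<dots> \<le> Re u / (cmod u)\<^sup>2"
    using assms(1) by (intro divide_right_mono) auto
  finally show ?thesis by (simp add: Re_inverse cmod_power2)
qed

lemma norm_inverse_diff_le:
  assumes "g \<le> Re x" "g \<le> Re y" "0 < g"
  shows "cmod (inverse x - inverse y) \<le> cmod (x - y) / g\<^sup>2"
proof -
  have gx: "g \<le> cmod x" and gy: "g \<le> cmod y"
    using assms complex_Re_le_cmod[of x] complex_Re_le_cmod[of y] by linarith+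
  then have "x \<noteq> 0" "y \<noteq> 0" using assms(3) by auto
  then have "cmod (inverse x - inverse y) = cmod (x - y) / (cmod x * cmod y)"
    by (simp add: inverse_diff_inverse norm_mult norm_inverse norm_minus_commute divide_inverse)
  also have "\<dots> \<le> cmod (x - y) / g\<^sup>2"
    using gx gy assms(3) by (intro divide_left_mono mult_pos_pos) (auto simp: power2_eq_square intro: mult_mono)
  finally show ?thesis .
qed

lemma inverse_in_ball:
  assumes "g < Re u" "0 < g"
  shows "inverse u \<in> ball (complex_of_real (1 / (2 * g))) (1 / (2 * g))"
proof -
  have u0: "u \<noteq> 0" using assms by auto
  have "(cmod (of_real (2 * g) - u))\<^sup>2 < (cmod u)\<^sup>2"
    using assms unfolding cmod_power2 by (simp add: power2_eq_square algebra_simps)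
  then have "cmod (of_real (2 * g) - u) < cmod u"
    by (simp add: power_less_imp_less_base)
  moreover have "complex_of_real (1 / (2 * g)) - inverse u = (u - of_real (2 * g)) / (of_real (2 * g) * u)"
    using u0 assms by (simp add: field_simps)
  ultimately show ?thesis
    using u0 assms by (simp add: dist_norm norm_divide norm_mult divide_simps norm_minus_commute)
qed

lemma inverse_shift_mem:
  assumes "0 < \<gamma>" "\<forall>\<beta>\<in>B. \<gamma> \<le> Re \<beta>" "\<forall>z\<in>H. 0 < Re z"
    and "ball (complex_of_real (1 / (2 * \<gamma>))) (1 / (2 * \<gamma>)) \<subseteq> H"
  shows "\<forall>z\<in>H. \<forall>b\<in>B. inverse (z + b) \<in> H"
proof (intro ballI)
  fix z b assume "z \<in> H" "b \<in> B"
  then have "\<gamma> < Re (z + b)" using assms(2,3) by fastforce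
  then show "inverse (z + b) \<in> H" using inverse_in_ball assms(1,4) by blast
qed

lemma inverse_shift_in_region:
  assumes "0 \<le> Re x" "cmod x \<le> 1" "1 \<le> Re b" "cmod b \<le> R"
  shows "1 / (1 + R)\<^sup>2 \<le> Re (inverse (x + b)) \<and> cmod (inverse (x + b)) \<le> 1"
  using assms norm_triangle_ineq[of x b]
  by (intro conjI Re_inverse_ge norm_inverse_le_one) auto

subsection \<open>Words, composed maps and weights\<close>

definition words :: "'a set \<Rightarrow> nat \<Rightarrow> 'a list set" where
  "words B n = {bs. set bs \<subseteq> B \<and> length bs = n}"

lemma words_Suc: "words B (Suc n) = (\<lambda>(b, bs). b # bs) ` (B \<times> words B n)"
  unfolding words_def by (auto simp: length_Suc_conv image_iff)

text \<open>The first letter of a word is applied first.\<close>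

fun word_map :: "complex list \<Rightarrow> complex \<Rightarrow> complex" where
  "word_map [] z = z"
| "word_map (b # bs) z = word_map bs (inverse (z + b))"

fun word_weight :: "real \<Rightarrow> complex list \<Rightarrow> complex \<Rightarrow> real" where
  "word_weight s [] z = 1"
| "word_weight s (b # bs) z = cmod (z + b) powr (-2 * s) * word_weight s bs (inverse (z + b))"

lemma word_weight_nonneg: "0 \<le> word_weight s bs z"
  by (induction bs arbitrary: z) auto

lemma word_map_mem:
  assumes "\<forall>z\<in>H. \<forall>b\<in>B. inverse (z + b) \<in> H" "z \<in> H" "set bs \<subseteq> B"
  shows "word_map bs z \<in> H"
  using assms(2,3) by (induction bs arbitrary: z) (use assms(1) in auto)

lemma Lambda_op_power_eq:
  assumes maps: "\<forall>z\<in>H. \<forall>b\<in>B. inverse (z + b) \<in> H"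
    and eig: "\<forall>z\<in>H. Lambda_op B s v z = lam * v z" and "z \<in> H"
  shows "lam ^ n * v z = (\<Sum>bs\<in>words B n. word_weight s bs z * v (word_map bs z))"
  using \<open>z \<in> H\<close>
proof (induction n arbitrary: z)
  case 0
  have "words B 0 = {[]}" by (auto simp: words_def)
  then show ?case by simp
next
  case (Suc n)
  have "lam ^ Suc n * v z = lam ^ n * Lambda_op B s v z"
    using eig Suc.prems by simp
  also have "\<dots> = (\<Sum>b\<in>B. cmod (z + b) powr (-2 * s) * (lam ^ n * v (inverse (z + b))))"
    by (simp add: Lambda_op_def sum_distrib_left mult.left_commute)
  also have "\<dots> = (\<Sum>b\<in>B. \<Sum>bs\<in>words B n. word_weight s (b # bs) z * v (word_map (b # bs) z))"
    using Suc.IH maps Suc.prems by (simp add: sum_distrib_left mult.assoc)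
  also have "\<dots> = (\<Sum>(b, bs)\<in>B \<times> words B n. word_weight s (b # bs) z * v (word_map (b # bs) z))"
    by (rule sum.cartesian_product)
  also have "\<dots> = (\<Sum>bs\<in>words B (Suc n). word_weight s bs z * v (word_map bs z))"
    unfolding words_Suc by (subst sum.reindex) (auto simp: inj_on_def split_def)
  finally show ?case .
qed

subsection \<open>Distortion of the weights\<close>

text \<open>
  The weight of a word \<open>w\<close> is \<open>|T\<^sub>w'(z)|\<^sup>s\<close> for the Moebius map \<open>T\<^sub>w\<close> of the word; prefixing a
  letter \<open>\<beta>\<close> moves the pole \<open>p\<close> of \<open>T\<^sub>w\<close> to \<open>1/p - \<beta>\<close>, which keeps \<open>Re p \<le> -\<gamma>\<close>.
\<close>

lemma word_weight_eq_powr: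
  assumes "\<forall>\<beta>\<in>B. \<gamma> \<le> Re \<beta>" "0 < \<gamma>" "bs \<noteq> []" "set bs \<subseteq> B"
  shows "\<exists>c p. 0 < c \<and> Re p \<le> -\<gamma> \<and>
           (\<forall>z. 0 \<le> Re z \<longrightarrow> word_weight s bs z = c * cmod (z - p) powr (-2 * s))"
  using assms(3,4)
proof (induction bs)
  case Nil
  then show ?case by simp
next
  case (Cons b bs)
  have b: "\<gamma> \<le> Re b" using Cons.prems assms(1) by simp
  show ?case
  proof (cases "bs = []")
    case True
    show ?thesis by (rule exI[of _ 1], rule exI[of _ "-b"]) (use True b in auto)
  next
    case False
    then obtain c p where c: "0 < c" and p: "Re p \<le> -\<gamma>"
      and w: "\<forall>z. 0 \<le> Re z \<longrightarrow> word_weight s bs z = c * cmod (z - p) powr (-2 * s)"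
      using Cons by auto
    have p0: "p \<noteq> 0" using p assms(2) by auto
    have "Re (inverse p) \<le> 0" using p assms(2) by (simp add: Re_inverse divide_nonpos_nonneg)
    then have Re_p': "Re (inverse p - b) \<le> -\<gamma>" using b by simp
    have w': "word_weight s (b # bs) z = c * cmod p powr (-2 * s) * cmod (z - (inverse p - b)) powr (-2 * s)"
      if z: "0 \<le> Re z" for z
    proof -
      have zb: "z + b \<noteq> 0" using z b assms(2) by (auto simp: complex_eq_iff)
      have "0 \<le> Re (inverse (z + b))" using Re_inverse_pos[of "z + b"] z b assms(2) by simp
      then have "word_weight s (b # bs) z = c * (cmod (z + b) * cmod (inverse (z + b) - p)) powr (-2 * s)"
        using w by (simp add: powr_mult)
      also have "(z + b) * (inverse (z + b) - p) = - p * (z - (inverse p - b))"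
        using zb p0 by (simp add: field_simps)
      then have "cmod (z + b) * cmod (inverse (z + b) - p) = cmod p * cmod (z - (inverse p - b))"
        by (metis norm_minus_cancel norm_mult)
      finally show ?thesis by (simp add: powr_mult)
    qed
    show ?thesis
      using c p0 Re_p' w' by (intro exI[of _ "c * cmod p powr (-2 * s)"] exI[of _ "inverse p - b"]) auto
  qed
qed

lemma powr_neg_le_exp_mult:
  fixes a b g t :: real
  assumes "0 < g" "g \<le> a" "g \<le> b" "0 \<le> t"
  shows "a powr (-t) \<le> exp (t * \<bar>b - a\<bar> / g) * b powr (-t)"
proof -
  have "ln b - ln a \<le> b / a - 1"
    using assms ln_le_minus_one[of "b / a"] by (simp add: ln_div)
  also have "\<dots> = (b - a) / a"
    using assms by (simp add: field_simps)
  also have "\<dots> \<le> \<bar>b - a\<bar> / g"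
    using assms by (intro frac_le) auto
  finally have "t * (ln b - ln a) \<le> t * (\<bar>b - a\<bar> / g)"
    using assms(4) by (intro mult_left_mono)
  then show ?thesis
    using assms by (simp add: powr_def exp_add[symmetric] algebra_simps)
qed

lemma word_weight_le_exp_mult:
  assumes "\<forall>\<beta>\<in>B. \<gamma> \<le> Re \<beta>" "0 < \<gamma>" "0 \<le> s" "set bs \<subseteq> B" "0 \<le> Re z0" "0 \<le> Re z1"
  shows "word_weight s bs z0 \<le> exp (2 * s / \<gamma> * cmod (z1 - z0)) * word_weight s bs z1"
proof (cases "bs = []")
  case False
  then obtain c p where c: "0 < c" and p: "Re p \<le> -\<gamma>"
    and w: "\<forall>z. 0 \<le> Re z \<longrightarrow> word_weight s bs z = c * cmod (z - p) powr (-2 * s)"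
    using word_weight_eq_powr[OF assms(1,2)] assms(4) by blast
  have far: "\<gamma> \<le> cmod (z - p)" if "0 \<le> Re z" for z
    using that p complex_Re_le_cmod[of "z - p"] by simp
  have "cmod (z0 - p) powr (-2 * s)
      \<le> exp (2 * s * \<bar>cmod (z1 - p) - cmod (z0 - p)\<bar> / \<gamma>) * cmod (z1 - p) powr (-2 * s)"
    using powr_neg_le_exp_mult[of \<gamma> "cmod (z0 - p)" "cmod (z1 - p)" "2 * s"] far assms by simp
  also have "\<dots> \<le> exp (2 * s / \<gamma> * cmod (z1 - z0)) * cmod (z1 - p) powr (-2 * s)"
  proof (intro mult_right_mono)
    have "\<bar>cmod (z1 - p) - cmod (z0 - p)\<bar> \<le> cmod (z1 - z0)"
      using norm_triangle_ineq3[of "z1 - p" "z0 - p"] by simp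
    then show "exp (2 * s * \<bar>cmod (z1 - p) - cmod (z0 - p)\<bar> / \<gamma>) \<le> exp (2 * s / \<gamma> * cmod (z1 - z0))"
      using assms(2,3) by (simp add: divide_right_mono mult_left_mono)
  qed simp
  finally have "cmod (z0 - p) powr (-2 * s) \<le> exp (2 * s / \<gamma> * cmod (z1 - z0)) * cmod (z1 - p) powr (-2 * s)" .
  then show ?thesis using w c assms(5,6) by (simp add: mult.left_commute)
qed (use assms in simp)

subsection \<open>Contraction of the composed maps\<close>

lemma word_map_contracts:
  assumes B: "\<forall>b\<in>B. 1 \<le> Re b \<and> cmod b \<le> R" and "0 \<le> R"
  defines "\<delta> \<equiv> 1 / (1 + R)\<^sup>2"
  assumes "\<delta> \<le> Re x" "cmod x \<le> 1" "\<delta> \<le> Re y" "cmod y \<le> 1" "set bs \<subseteq> B"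
  shows "cmod (word_map bs x - word_map bs y) \<le> cmod (x - y) / ((1 + \<delta>)\<^sup>2) ^ length bs"
  using assms(4-)
proof (induction bs arbitrary: x y)
  case Nil
  then show ?case by simp
next
  case (Cons b bs)
  have b: "1 \<le> Re b" "cmod b \<le> R" using B Cons.prems by auto
  have \<delta>: "0 < \<delta>" using \<open>0 \<le> R\<close> by (simp add: \<delta>_def)
  have "\<delta> \<le> Re (inverse (z + b)) \<and> cmod (inverse (z + b)) \<le> 1"
    if "\<delta> \<le> Re z" "cmod z \<le> 1" for z
    using inverse_shift_in_region[of z b R] that b \<delta> unfolding \<delta>_def by linarith
  then have "cmod (word_map bs (inverse (x + b)) - word_map bs (inverse (y + b)))
      \<le> cmod (inverse (x + b) - inverse (y + b)) / ((1 + \<delta>)\<^sup>2) ^ length bs"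
    using Cons.prems by (intro Cons.IH) auto
  also have "\<dots> \<le> cmod (x - y) / (1 + \<delta>)\<^sup>2 / ((1 + \<delta>)\<^sup>2) ^ length bs"
    using norm_inverse_diff_le[of "1 + \<delta>" "x + b" "y + b"] Cons.prems b \<delta>
    by (intro divide_right_mono) auto
  finally show ?case by (simp add: field_simps)
qed

lemma word_maps_eventually_close:
  assumes "finite B" "\<forall>b\<in>B. 1 \<le> Re b" "0 \<le> Re z0" "0 \<le> Re z1" "0 < d"
  shows "\<exists>N. \<forall>bs\<in>words B N. dist (word_map bs z0) (word_map bs z1) < d"
proof -
  define R where "R = Max (insert 0 (cmod ` B))"
  have R: "0 \<le> R" "\<forall>b\<in>B. 1 \<le> Re b \<and> cmod b \<le> R"
    using assms(1,2) by (auto simp: R_def)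
  define \<delta> where "\<delta> = 1 / (1 + R)\<^sup>2"
  have "1 < (1 + \<delta>)\<^sup>2" using R by (simp add: \<delta>_def)
  then have "inverse ((1 + \<delta>)\<^sup>2) < 1" using inverse_less_1_iff by blast
  moreover have "0 < d / 2" using assms(5) by simp
  ultimately obtain n where n: "inverse ((1 + \<delta>)\<^sup>2) ^ n < d / 2"
    using real_arch_pow_inv by blast
  text \<open>Two letters take any point of the right half plane into the contracted region.\<close>
  have region: "\<delta> \<le> Re (inverse (inverse (z + b1) + b2)) \<and> cmod (inverse (inverse (z + b1) + b2)) \<le> 1"
    if "0 \<le> Re z" "b1 \<in> B" "b2 \<in> B" for z b1 b2
    using that R Re_inverse_pos[of "z + b1"] norm_inverse_le_one[of "z + b1"]
    by (intro inverse_shift_in_region[of _ b2 R, folded \<delta>_def]) auto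
  have "dist (word_map bs z0) (word_map bs z1) < d" if word: "bs \<in> words B (Suc (Suc n))" for bs
  proof -
    obtain b1 b2 bs' where bs: "bs = b1 # b2 # bs'" "b1 \<in> B" "b2 \<in> B" "set bs' \<subseteq> B" "length bs' = n"
      using word by (auto simp: words_def length_Suc_conv)
    define x0 where "x0 = inverse (inverse (z0 + b1) + b2)"
    define x1 where "x1 = inverse (inverse (z1 + b1) + b2)"
    have x: "\<delta> \<le> Re x0" "cmod x0 \<le> 1" "\<delta> \<le> Re x1" "cmod x1 \<le> 1"
      using region assms(3,4) bs unfolding x0_def x1_def by blast+
    have "cmod (word_map bs' x0 - word_map bs' x1) \<le> cmod (x0 - x1) / ((1 + \<delta>)\<^sup>2) ^ n"
      using word_map_contracts[OF R(2,1) x[unfolded \<delta>_def] bs(4), folded \<delta>_def] bs(5) by simp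
    also have "\<dots> \<le> 2 * inverse ((1 + \<delta>)\<^sup>2) ^ n"
      using x norm_triangle_ineq4[of x0 x1]
      by (simp add: power_inverse divide_inverse mult.commute mult_right_mono)
    also have "\<dots> < d" using n by simp
    finally show ?thesis using bs by (simp add: dist_norm x0_def x1_def)
  qed
  then show ?thesis by blast
qed

subsection \<open>Comparison of the eigenfunction at two points\<close>

lemma word_map_values_eventually_close:
  fixes v :: "complex \<Rightarrow> real"
  assumes "finite B" "\<forall>b\<in>B. 1 \<le> Re b" "\<forall>z\<in>H. 0 \<le> Re z"
    and maps: "\<forall>z\<in>H. \<forall>b\<in>B. inverse (z + b) \<in> H"
    and "uniformly_continuous_on H v" "z0 \<in> H" "z1 \<in> H" "0 < e"
  shows "\<exists>N. \<forall>bs\<in>words B N. v (word_map bs z0) \<le> v (word_map bs z1) + e"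
proof -
  obtain d where "0 < d" and d: "\<forall>x\<in>H. \<forall>x'\<in>H. dist x' x < d \<longrightarrow> dist (v x') (v x) < e"
    using assms(5,8) unfolding uniformly_continuous_on_def by blast
  obtain N where N: "\<forall>bs\<in>words B N. dist (word_map bs z0) (word_map bs z1) < d"
    using word_maps_eventually_close[OF assms(1,2) _ _ \<open>0 < d\<close>] assms(3,6,7) by blast
  have "v (word_map bs z0) \<le> v (word_map bs z1) + e" if bs: "bs \<in> words B N" for bs
  proof -
    have "word_map bs z0 \<in> H" "word_map bs z1 \<in> H"
      using word_map_mem[OF maps] bs assms(6,7) by (auto simp: words_def)
    then have "dist (v (word_map bs z0)) (v (word_map bs z1)) < e" using d N bs by blast
    then show ?thesis by (simp add: dist_real_def)
  qed
  then show ?thesis by blast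
qed

lemma strictly_pos_bar_ge:
  assumes "bounded H" "strictly_pos_bar H v"
  shows "\<exists>c>0. \<forall>z\<in>H. c \<le> v z"
proof (cases "H = {}")
  case False
  obtain g where g: "continuous_on (closure H) g" "\<forall>z\<in>H. g z = v z" "\<forall>z\<in>closure H. 0 < g z"
    using assms(2) unfolding strictly_pos_bar_def by blast
  have "compact (closure H)" using assms(1) by (simp add: compact_closure)
  then obtain zm where zm: "zm \<in> closure H" "\<forall>z\<in>closure H. g zm \<le> g z"
    using continuous_attains_inf[OF _ _ g(1)] False by blast
  have "\<forall>z\<in>H. g zm \<le> v z" using zm(2) g(2) closure_subset by fastforce
  then show ?thesis using g(3) zm(1) by blast
qed (rule exI[of _ 1], simp)

lemma strictly_pos_bar_uniformly_continuous:
  assumes "bounded H" "strictly_pos_bar H v"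
  shows "uniformly_continuous_on H v"
proof -
  obtain g where g: "continuous_on (closure H) g" "\<forall>z\<in>H. g z = v z"
    using assms(2) unfolding strictly_pos_bar_def by blast
  have uc: "uniformly_continuous_on (closure H) g"
    using compact_uniformly_continuous[OF g(1)] assms(1) by (simp add: compact_closure)
  then show ?thesis
    unfolding uniformly_continuous_on_def
  proof (intro allI impI)
    fix e :: real assume "0 < e"
    then obtain d where "0 < d" and d: "\<forall>x\<in>closure H. \<forall>x'\<in>closure H. dist x' x < d \<longrightarrow> dist (g x') (g x) < e"
      using uc unfolding uniformly_continuous_on_def by blast
    have "\<forall>x\<in>H. \<forall>x'\<in>H. dist x' x < d \<longrightarrow> dist (v x') (v x) < e"
    proof (intro ballI impI)
      fix x x' assume "x \<in> H" "x' \<in> H" "dist x' x < d"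
      then show "dist (v x') (v x) < e" using d g(2) closure_subset by (metis subsetD)
    qed
    then show "\<exists>d>0. \<forall>x\<in>H. \<forall>x'\<in>H. dist x' x < d \<longrightarrow> dist (v x') (v x) < e"
      using \<open>0 < d\<close> by blast
  qed
qed

lemma eigenvalue_pos:
  assumes "finite B" "B \<noteq> {}" "\<forall>b\<in>B. z + b \<noteq> 0" "\<forall>b\<in>B. 0 < v (inverse (z + b))"
    and "0 < v z" "Lambda_op B s v z = lam * v z"
  shows "0 < lam"
proof -
  have "0 < Lambda_op B s v z"
    unfolding Lambda_op_def using assms(3,4) by (intro sum_pos[OF assms(1,2)]) simp
  then show ?thesis using assms(5,6) by (simp add: zero_less_mult_iff)
qed

lemma sum_le_of_weight_ratio:
  fixes a b f h :: "'a \<Rightarrow> real"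
  assumes "finite W" "0 \<le> K" "0 < c" "0 \<le> e"
    and "\<And>w. w \<in> W \<Longrightarrow> 0 \<le> a w \<and> a w \<le> K * b w \<and> 0 \<le> b w"
    and "\<And>w. w \<in> W \<Longrightarrow> 0 \<le> f w \<and> f w \<le> h w + e \<and> c \<le> h w"
  shows "(\<Sum>w\<in>W. a w * f w) \<le> K * (1 + e / c) * (\<Sum>w\<in>W. b w * h w)"
proof -
  have "a w * f w \<le> K * (1 + e / c) * (b w * h w)" if w: "w \<in> W" for w
  proof -
    have "e = e / c * c" using assms(3) by simp
    also have "\<dots> \<le> e / c * h w" using assms(3,4) assms(6)[OF w] by (intro mult_left_mono) auto
    finally have "e \<le> e / c * h w" .
    then have "f w \<le> (1 + e / c) * h w" using assms(6)[OF w] by (simp add: algebra_simps)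
    then have "a w * f w \<le> K * b w * ((1 + e / c) * h w)"
      using assms(5,6)[OF w] by (intro mult_mono) auto
    then show ?thesis by (simp add: ac_simps)
  qed
  then show ?thesis by (simp add: sum_distrib_left sum_mono)
qed

lemma eigenfunction_le_of_distortion:
  assumes "finite B" and maps: "\<forall>z\<in>H. \<forall>b\<in>B. inverse (z + b) \<in> H"
    and eig: "\<forall>z\<in>H. Lambda_op B s v z = lam * v z" and "0 < lam"
    and c: "0 < c" "\<forall>z\<in>H. c \<le> v z" and "z0 \<in> H" "z1 \<in> H"
    and K: "\<And>bs. set bs \<subseteq> B \<Longrightarrow> word_weight s bs z0 \<le> K * word_weight s bs z1"
    and close: "\<And>e. 0 < e \<Longrightarrow> \<exists>N. \<forall>bs\<in>words B N. v (word_map bs z0) \<le> v (word_map bs z1) + e"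
  shows "v z0 \<le> K * v z1"
proof -
  have "0 \<le> K" using K[of "[]"] by simp
  have v1: "0 < v z1" using c \<open>z1 \<in> H\<close> by force
  have approx: "v z0 \<le> K * (1 + e / c) * v z1" if "0 < e" for e
  proof -
    obtain N where N: "\<forall>bs\<in>words B N. v (word_map bs z0) \<le> v (word_map bs z1) + e"
      using close \<open>0 < e\<close> by blast
    have in_H: "word_map bs z \<in> H" if "bs \<in> words B N" "z \<in> H" for bs z
      using word_map_mem[OF maps] that by (auto simp: words_def)
    have "lam ^ N * v z0 \<le> K * (1 + e / c) * (lam ^ N * v z1)"
      unfolding Lambda_op_power_eq[OF maps eig \<open>z0 \<in> H\<close>] Lambda_op_power_eq[OF maps eig \<open>z1 \<in> H\<close>]
    proof (rule sum_le_of_weight_ratio)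
      show "finite (words B N)" using \<open>finite B\<close> by (simp add: words_def finite_lists_length_eq)
    next
      fix bs assume "bs \<in> words B N"
      then show "0 \<le> word_weight s bs z0 \<and> word_weight s bs z0 \<le> K * word_weight s bs z1
          \<and> 0 \<le> word_weight s bs z1"
        using K word_weight_nonneg by (simp add: words_def)
    next
      fix bs assume bs: "bs \<in> words B N"
      then have "c \<le> v (word_map bs z0)" "c \<le> v (word_map bs z1)"
        using c(2) in_H \<open>z0 \<in> H\<close> \<open>z1 \<in> H\<close> by blast+
      then show "0 \<le> v (word_map bs z0) \<and> v (word_map bs z0) \<le> v (word_map bs z1) + e
          \<and> c \<le> v (word_map bs z1)"
        using N bs c(1) by force
    qed (use \<open>0 \<le> K\<close> \<open>0 < e\<close> c(1) in auto)
    then show ?thesis using \<open>0 < lam\<close> by (simp add: mult.left_commute)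
  qed
  show ?thesis
  proof (rule field_le_epsilon)
    fix e :: real assume "0 < e"
    define M where "M = K * v z1 / c"
    have "0 \<le> M" using \<open>0 \<le> K\<close> v1 c(1) by (simp add: M_def)
    then have "v z0 \<le> K * (1 + e / (M + 1) / c) * v z1"
      using \<open>0 < e\<close> by (intro approx) (simp add: add_nonneg_pos)
    also have "\<dots> = K * v z1 + e * (M / (M + 1))"
      by (simp add: M_def algebra_simps)
    also have "\<dots> \<le> K * v z1 + e"
      using \<open>0 \<le> M\<close> \<open>0 < e\<close> by (intro add_left_mono mult_left_le) auto
    finally show "v z0 \<le> K * v z1 + e" .
  qed
qed

theorem corollary7p12:
  fixes B :: "complex set" and \<gamma> s lam :: real and m :: nat
    and H :: "complex set" and v :: "complex \<Rightarrow> real" and z0 z1 :: complex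
  assumes "finite B" and "B \<noteq> {}" and "\<gamma> \<ge> 1" and "\<forall>\<beta>\<in>B. Re \<beta> \<ge> \<gamma>"
    and "s > 0"
    and "open H" and "bounded H" and "mildly_regular H"
    and "ball (complex_of_real (1 / (2 * \<gamma>))) (1 / (2 * \<gamma>)) \<subseteq> H"
    and "\<forall>z\<in>H. Re z > 0"
    and "m \<ge> 1" and "Cm_bar m H v" and "strictly_pos_bar H v"
    and "\<forall>z\<in>H. Lambda_op B s v z = lam * v z"
    and "z0 \<in> H" and "z1 \<in> H"
  shows "v z0 \<le> v z1 * exp ((sqrt 5 * s / \<gamma>) * cmod (z1 - z0))"
proof -
  have "0 < \<gamma>" using assms(3) by simp
  have Re_H: "\<forall>z\<in>H. 0 \<le> Re z" using assms(10) less_imp_le by blast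
  have Re_B: "\<forall>b\<in>B. 1 \<le> Re b" using assms(3,4) order_trans by blast
  have maps: "\<forall>z\<in>H. \<forall>b\<in>B. inverse (z + b) \<in> H"
    using inverse_shift_mem[OF \<open>0 < \<gamma>\<close> assms(4,10,9)] .
  obtain c where c: "0 < c" "\<forall>z\<in>H. c \<le> v z"
    using strictly_pos_bar_ge[OF assms(7,13)] by blast
  have v_pos: "0 < v z" if "z \<in> H" for z
    using c that by fastforce
  have "0 < lam"
  proof (rule eigenvalue_pos[where z = z0])
    show "\<forall>b\<in>B. z0 + b \<noteq> 0" using assms(4,10,15) \<open>0 < \<gamma>\<close> by (fastforce simp: complex_eq_iff)
    show "\<forall>b\<in>B. 0 < v (inverse (z0 + b))" using v_pos maps assms(15) by blast
  qed (use assms(1,2,14,15) v_pos in auto)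
  define K where "K = exp (2 * s / \<gamma> * cmod (z1 - z0))"
  have "v z0 \<le> K * v z1"
  proof (rule eigenfunction_le_of_distortion[OF assms(1) maps assms(14) \<open>0 < lam\<close> c assms(15,16)])
    show "word_weight s bs z0 \<le> K * word_weight s bs z1" if "set bs \<subseteq> B" for bs
      unfolding K_def using that assms(5,15,16) Re_H
      by (intro word_weight_le_exp_mult[OF assms(4) \<open>0 < \<gamma>\<close>]) auto
    show "\<exists>N. \<forall>bs\<in>words B N. v (word_map bs z0) \<le> v (word_map bs z1) + e" if "0 < e" for e
      using word_map_values_eventually_close[OF assms(1) Re_B Re_H maps _ assms(15,16) that]
        strictly_pos_bar_uniformly_continuous[OF assms(7,13)] by blast
  qed
  also have "K \<le> exp ((sqrt 5 * s / \<gamma>) * cmod (z1 - z0))"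
    using assms(3,5) real_le_rsqrt[of 2 5]
    by (simp add: K_def divide_right_mono mult_right_mono)
  then have "K * v z1 \<le> exp ((sqrt 5 * s / \<gamma>) * cmod (z1 - z0)) * v z1"
    using v_pos[OF assms(16)] by simp
  finally show ?thesis by (simp add: mult.commute)
qed

end
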